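(* Let $I$ be a nonempty open real interval, let $\varphi:I\to\mathbb{R}$ be a strictly monotone function, let $f:I\to\mathbb{R}$ be a function that is not identically zero, and let $t\in\,]0,1[\,$. Then the following assertions are equivalent: (i) $(\varphi,f)$ satisfies \[ \big(tf(x)+(1-t)f(y)\big)\varphi(tx+(1-t)y)=tf(x)\varphi(x)+(1-t)f(y)\varphi(y) \qquad\text{for all } x,y\in I; \] (ii) $f$ is nowhere zero on $I$, $f$ and $\varphi$ are twice differentiable on $I$ with $2f'\varphi'+f\varphi''=0$ on $I$, and there exists $p\in\mathbb{R}$ with $(t-\frac12)p=0$ such that $f''=pf$ on $I$; (iii) $f$ is nowhere zero on $I$ and there exists $p\in\mathbb{R}$ with $(t-\frac12)p=0$ such that $(f,f\cdot\varphi)\sim(S_p,C_p)$ on $I$.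
   Context: For $p\in\mathbb{R}$, the functions $S_p,C_p:\mathbb{R}\to\mathbb{R}$ are defined by $S_p(x)=\sin(\sqrt{-p}\,x)$, $C_p(x)=\cos(\sqrt{-p}\,x)$ if $p<0$; $S_p(x)=x$, $C_p(x)=1$ if $p=0$; $S_p(x)=\sinh(\sqrt{p}\,x)$, $C_p(x)=\cosh(\sqrt{p}\,x)$ if $p>0$. Two pairs of functions $(f,g):I\to\mathbb{R}^2$ and $(h,k):I\to\mathbb{R}^2$ are called equivalent, written $(f,g)\sim(h,k)$, if there exist constants $a,b,c,d\in\mathbb{R}$ with $ad\neq cb$ such that $h=af+bg$ and $k=cf+dg$ on $I$. *)

theory Defs
  imports "HOL-Analysis.Analysis"
begin

definition S_fun :: "real \<Rightarrow> real \<Rightarrow> real" where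
  "S_fun p x = (if p < 0 then sin (sqrt (- p) * x) else if p = 0 then x else sinh (sqrt p * x))"

definition C_fun :: "real \<Rightarrow> real \<Rightarrow> real" where
  "C_fun p x = (if p < 0 then cos (sqrt (- p) * x) else if p = 0 then 1 else cosh (sqrt p * x))"

definition pair_equiv_on ::
  "real set \<Rightarrow> (real \<Rightarrow> real) \<Rightarrow> (real \<Rightarrow> real) \<Rightarrow> (real \<Rightarrow> real) \<Rightarrow> (real \<Rightarrow> real) \<Rightarrow> bool" where
  "pair_equiv_on I f g h k \<longleftrightarrow>
     (\<exists>a b c d. a * d \<noteq> c * b \<and>
        (\<forall>x\<in>I. h x = a * f x + b * g x \<and> k x = c * f x + d * g x))"

end

theory Submission
  imports Defs
begin

(* (iii) implies (i) is the addition theorem for S_p and C_p at the weighted mean; p <> 0 forces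
   t = 1/2, i.e. the midpoint.  (ii) implies (iii) because f and g = f phi both solve u'' = p u,
   so they are combinations of S_p and C_p, with independent coefficients since phi is not constant.

   Injectivity of phi makes f nowhere zero, and a jump of the
   monotone phi would, via the equation, reappear along a geometric sequence approaching the jump,
   so phi is continuous.  Solving the equation for f expresses f through phi, and averaging the
   equation over all pairs x = m - (1-t) s, y = m + t s (whose weighted mean is m) writes phi near m
   as a quotient of antiderivatives of f and f phi; bootstrapping yields twice differentiability.
   Finally D(z) = f(m) g(z) - g(m) f(z) satisfies t D(x) + (1-t) D(y) = 0 along such pairs;
   differentiating twice gives f g'' = g f'' and, with a = f''/f, (1-t)^2 a(x) = t^2 a(y) for
   x <> y, so a is a constant p, and p = 0 unless t = 1/2. *)

definition twice_differentiable_on :: "(real \<Rightarrow> real) \<Rightarrow> real set \<Rightarrow> bool" where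
  "twice_differentiable_on u S \<longleftrightarrow> (\<forall>x\<in>S. u differentiable (at x) \<and> deriv u differentiable (at x))"

lemma differentiable_at_cong_ev:
  fixes u v :: "real \<Rightarrow> real"
  assumes "eventually (\<lambda>z. u z = v z) (nhds x)"
  shows "u differentiable (at x) \<longleftrightarrow> v differentiable (at x)"
  unfolding real_differentiable_def using DERIV_cong_ev[OF refl assms refl] by simp

lemma eventually_eq_on_open:
  "open S \<Longrightarrow> x \<in> S \<Longrightarrow> \<forall>z\<in>S. u z = v z \<Longrightarrow> eventually (\<lambda>z. u z = v z) (nhds x)"
  unfolding eventually_nhds by blast

lemma deriv_eq_on_open:
  fixes u v :: "real \<Rightarrow> real"
  assumes "open S" "\<forall>z\<in>S. u z = v z" "x \<in> S"
  shows "deriv u x = deriv v x"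
  using deriv_cong_ev[OF eventually_eq_on_open[OF assms(1,3,2)] refl] .

lemma twice_differentiable_on_cong:
  assumes "open S" "\<forall>x\<in>S. u x = v x" "twice_differentiable_on u S"
  shows "twice_differentiable_on v S"
  unfolding twice_differentiable_on_def
proof
  fix x assume x: "x \<in> S"
  have "\<forall>z\<in>S. deriv u z = deriv v z"
    using deriv_eq_on_open[OF assms(1,2)] by blast
  then have "eventually (\<lambda>z. deriv u z = deriv v z) (nhds x)"
    by (rule eventually_eq_on_open[OF assms(1) x])
  moreover have "eventually (\<lambda>z. u z = v z) (nhds x)"
    using eventually_eq_on_open[OF assms(1) x assms(2)] .
  ultimately show "v differentiable (at x) \<and> deriv v differentiable (at x)"
    using assms(3) x differentiable_at_cong_ev unfolding twice_differentiable_on_def by blast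
qed

lemma twice_differentiable_on_subset:
  "twice_differentiable_on u S \<Longrightarrow> T \<subseteq> S \<Longrightarrow> twice_differentiable_on u T"
  unfolding twice_differentiable_on_def by blast

lemma twice_differentiable_on_DERIV:
  "twice_differentiable_on u S \<Longrightarrow> x \<in> S \<Longrightarrow> (u has_real_derivative deriv u x) (at x)"
  unfolding twice_differentiable_on_def using DERIV_deriv_iff_real_differentiable by blast

lemma twice_differentiable_on_DERIV2:
  "twice_differentiable_on u S \<Longrightarrow> x \<in> S \<Longrightarrow> (deriv u has_real_derivative deriv (deriv u) x) (at x)"
  unfolding twice_differentiable_on_def using DERIV_deriv_iff_real_differentiable by blast

lemma twice_differentiable_on_by_deriv:
  assumes "open S" "\<forall>x\<in>S. u differentiable (at x)"
    and "\<forall>x\<in>S. deriv u x = w x" "\<forall>x\<in>S. w differentiable (at x)"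
  shows "twice_differentiable_on u S"
  unfolding twice_differentiable_on_def
  using assms differentiable_at_cong_ev[OF eventually_eq_on_open[OF assms(1)]] by blast

lemma twice_differentiable_on_const: "twice_differentiable_on (\<lambda>x. c) S"
  by (simp add: twice_differentiable_on_def)

lemma twice_differentiable_on_diff:
  assumes "open S" "twice_differentiable_on u S" "twice_differentiable_on v S"
  shows "twice_differentiable_on (\<lambda>x. u x - v x) S"
proof (rule twice_differentiable_on_by_deriv[OF assms(1)])
  show "\<forall>x\<in>S. deriv (\<lambda>x. u x - v x) x = deriv u x - deriv v x"
    using assms by (auto intro!: DERIV_imp_deriv derivative_eq_intros twice_differentiable_on_DERIV)
qed (use assms in \<open>auto simp: twice_differentiable_on_def\<close>)

lemma twice_differentiable_on_mult:
  assumes "open S" "twice_differentiable_on u S" "twice_differentiable_on v S"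
  shows "twice_differentiable_on (\<lambda>x. u x * v x) S"
proof (rule twice_differentiable_on_by_deriv[OF assms(1)])
  show "\<forall>x\<in>S. deriv (\<lambda>x. u x * v x) x = deriv u x * v x + u x * deriv v x"
    using assms by (auto intro!: DERIV_imp_deriv derivative_eq_intros twice_differentiable_on_DERIV)
qed (use assms in \<open>auto simp: twice_differentiable_on_def\<close>)

lemma twice_differentiable_on_divide:
  assumes "open S" "twice_differentiable_on u S" "twice_differentiable_on v S" "\<forall>x\<in>S. v x \<noteq> 0"
  shows "twice_differentiable_on (\<lambda>x. u x / v x) S"
proof (rule twice_differentiable_on_by_deriv[OF assms(1)])
  show "\<forall>x\<in>S. deriv (\<lambda>x. u x / v x) x = (deriv u x * v x - u x * deriv v x) / (v x * v x)"
    using assms by (auto intro!: DERIV_imp_deriv derivative_eq_intros twice_differentiable_on_DERIV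
        simp: power2_eq_square)
qed (use assms in \<open>auto simp: twice_differentiable_on_def\<close>)

lemma twice_differentiable_on_compose_affine:
  assumes "open T" "twice_differentiable_on u S" "\<forall>x\<in>T. c * x + d \<in> S"
  shows "twice_differentiable_on (\<lambda>x. u (c * x + d)) T"
proof (rule twice_differentiable_on_by_deriv[OF assms(1)])
  have d: "((\<lambda>x. u (c * x + d)) has_real_derivative deriv u (c * x + d) * c) (at x)" if "x \<in> T" for x
    using assms that by (auto intro!: derivative_eq_intros DERIV_chain2[of u] twice_differentiable_on_DERIV)
  then show "\<forall>x\<in>T. deriv (\<lambda>x. u (c * x + d)) x = deriv u (c * x + d) * c"
    by (blast intro: DERIV_imp_deriv)
  show "\<forall>x\<in>T. (\<lambda>x. u (c * x + d)) differentiable (at x)"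
    using d real_differentiable_def by blast
  have "((\<lambda>x. deriv u (c * x + d) * c) has_real_derivative deriv (deriv u) (c * x + d) * c * c) (at x)"
    if "x \<in> T" for x
    using assms that by (auto intro!: derivative_eq_intros DERIV_chain2[of "deriv u"] twice_differentiable_on_DERIV2)
  then show "\<forall>x\<in>T. (\<lambda>x. deriv u (c * x + d) * c) differentiable (at x)"
    using real_differentiable_def by blast
qed

lemma deriv2_mult:
  assumes "open S" "twice_differentiable_on u S" "twice_differentiable_on v S" "x \<in> S"
  shows "deriv (deriv (\<lambda>x. u x * v x)) x
           = deriv (deriv u) x * v x + 2 * deriv u x * deriv v x + u x * deriv (deriv v) x"
proof -
  have "\<forall>z\<in>S. deriv (\<lambda>x. u x * v x) z = deriv u z * v z + u z * deriv v z"
  proof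
    fix z assume "z \<in> S"
    then have "((\<lambda>x. u x * v x) has_real_derivative deriv u z * v z + deriv v z * u z) (at z)"
      using assms(2,3) by (intro DERIV_mult twice_differentiable_on_DERIV)
    then show "deriv (\<lambda>x. u x * v x) z = deriv u z * v z + u z * deriv v z"
      by (simp add: DERIV_imp_deriv algebra_simps)
  qed
  then have "deriv (deriv (\<lambda>x. u x * v x)) x = deriv (\<lambda>z. deriv u z * v z + u z * deriv v z) x"
    by (rule deriv_eq_on_open[OF assms(1) _ assms(4)])
  also have "\<dots> = deriv (deriv u) x * v x + 2 * deriv u x * deriv v x + u x * deriv (deriv v) x"
  proof (rule DERIV_imp_deriv)
    have "((\<lambda>z. deriv u z * v z + u z * deriv v z) has_real_derivative
        (deriv (deriv u) x * v x + deriv v x * deriv u x) + (deriv u x * deriv v x + deriv (deriv v) x * u x)) (at x)"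
      using assms by (intro DERIV_add DERIV_mult twice_differentiable_on_DERIV twice_differentiable_on_DERIV2)
    then show "((\<lambda>z. deriv u z * v z + u z * deriv v z) has_real_derivative
        deriv (deriv u) x * v x + 2 * deriv u x * deriv v x + u x * deriv (deriv v) x) (at x)"
      by (simp add: algebra_simps)
  qed
  finally show ?thesis .
qed

definition SC_scale :: "real \<Rightarrow> real" where
  "SC_scale p = (if p = 0 then 1 else sqrt \<bar>p\<bar>)"

lemma S_fun_C_fun_cases:
  obtains k where "k > 0" "SC_scale p = k" "p = - k\<^sup>2"
    "S_fun p = (\<lambda>x. sin (k * x))" "C_fun p = (\<lambda>x. cos (k * x))"
  | "SC_scale p = 1" "p = 0" "S_fun p = (\<lambda>x. x)" "C_fun p = (\<lambda>x. 1)"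
  | k where "k > 0" "SC_scale p = k" "p = k\<^sup>2"
    "S_fun p = (\<lambda>x. sinh (k * x))" "C_fun p = (\<lambda>x. cosh (k * x))"
proof -
  consider "p < 0" | "p = 0" | "p > 0" by linarith
  then show thesis
  proof cases
    case 1
    then show thesis by (intro that(1)[of "sqrt (- p)"]) (auto simp: S_fun_def C_fun_def SC_scale_def)
  next
    case 2
    then show thesis by (intro that(2)) (auto simp: S_fun_def C_fun_def SC_scale_def)
  next
    case 3
    then show thesis by (intro that(3)[of "sqrt p"]) (auto simp: S_fun_def C_fun_def SC_scale_def)
  qed
qed

lemma SC_scale_pos: "SC_scale p > 0"
  by (cases p rule: S_fun_C_fun_cases) auto

lemma has_real_derivative_S_fun: "(S_fun p has_real_derivative SC_scale p * C_fun p x) (at x)"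
  by (cases p rule: S_fun_C_fun_cases) (auto intro!: derivative_eq_intros)

lemma has_real_derivative_C_fun: "(C_fun p has_real_derivative p / SC_scale p * S_fun p x) (at x)"
  by (cases p rule: S_fun_C_fun_cases) (auto intro!: derivative_eq_intros simp: power2_eq_square)

lemma C_fun_S_fun_pythagoras: "(SC_scale p)\<^sup>2 * (C_fun p x)\<^sup>2 - p * (S_fun p x)\<^sup>2 = (SC_scale p)\<^sup>2"
proof (cases p rule: S_fun_C_fun_cases)
  case (1 k)
  then show ?thesis using sin_cos_squared_add[of "k * x"] by (simp add: algebra_simps flip: distrib_left)
next
  case (3 k)
  then show ?thesis by (simp add: cosh_square_eq algebra_simps)
qed simp_all

lemma S_fun_C_fun_mean_identity:
  assumes "(t - 1/2) * p = 0"
  shows "S_fun p (t*x + (1-t)*y) * (t * C_fun p x + (1-t) * C_fun p y)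
       = C_fun p (t*x + (1-t)*y) * (t * S_fun p x + (1-t) * S_fun p y)"
proof (cases p rule: S_fun_C_fun_cases)
  case 2
  then show ?thesis by (simp add: algebra_simps)
next
  case (1 k)
  then have t: "t = 1/2" using assms by simp
  define m h where "m = k * (x+y)/2" and "h = k * (y-x)/2"
  have xy: "k * x = m - h" "k * y = m + h" "k * (t*x + (1-t)*y) = m"
    by (auto simp: m_def h_def t field_simps)
  have "S_fun p x = sin (m - h)" "S_fun p y = sin (m + h)" "S_fun p (t*x + (1-t)*y) = sin m"
    "C_fun p x = cos (m - h)" "C_fun p y = cos (m + h)" "C_fun p (t*x + (1-t)*y) = cos m"
    by (simp_all only: 1(4,5) xy)
  then show ?thesis
    by (simp only: sin_add sin_diff cos_add cos_diff) (simp add: t algebra_simps)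
next
  case (3 k)
  then have t: "t = 1/2" using assms by simp
  define m h where "m = k * (x+y)/2" and "h = k * (y-x)/2"
  have xy: "k * x = m - h" "k * y = m + h" "k * (t*x + (1-t)*y) = m"
    by (auto simp: m_def h_def t field_simps)
  have "S_fun p x = sinh (m - h)" "S_fun p y = sinh (m + h)" "S_fun p (t*x + (1-t)*y) = sinh m"
    "C_fun p x = cosh (m - h)" "C_fun p y = cosh (m + h)" "C_fun p (t*x + (1-t)*y) = cosh m"
    by (simp_all only: 3(4,5) xy)
  then show ?thesis
    by (simp only: sinh_add sinh_diff cosh_add cosh_diff) (simp add: t algebra_simps)
qed

lemma wronskian_constant:
  fixes u v :: "real \<Rightarrow> real"
  assumes "convex I"
    and u: "\<And>x. x \<in> I \<Longrightarrow> (u has_real_derivative u' x) (at x) \<and> (u' has_real_derivative p * u x) (at x)"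
    and v: "\<And>x. x \<in> I \<Longrightarrow> (v has_real_derivative v' x) (at x) \<and> (v' has_real_derivative p * v x) (at x)"
  obtains c where "\<forall>x\<in>I. u x * v' x - u' x * v x = c"
proof -
  have "\<exists>c. \<forall>x\<in>I. u x * v' x - u' x * v x = c"
  proof (rule has_field_derivative_zero_constant[OF assms(1)])
    fix x assume "x \<in> I"
    then have "((\<lambda>x. u x * v' x - u' x * v x) has_real_derivative
                  u' x * v' x + u x * (p * v x) - (p * u x * v x + u' x * v' x)) (at x)"
      using u v by (auto intro!: derivative_eq_intros)
    then show "((\<lambda>x. u x * v' x - u' x * v x) has_real_derivative 0) (at x within I)"
      by (auto intro: has_field_derivative_at_within simp: algebra_simps)
  qed
  then show thesis using that by blast
qed

lemma ode_solution_in_span_S_fun_C_fun: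
  fixes u :: "real \<Rightarrow> real"
  assumes "convex I" "twice_differentiable_on u I"
    and ode: "\<forall>x\<in>I. deriv (deriv u) x = p * u x"
  shows "\<exists>\<alpha> \<beta>. \<forall>x\<in>I. u x = \<alpha> * S_fun p x + \<beta> * C_fun p x"
proof -
  define \<kappa> where "\<kappa> = SC_scale p"
  have \<kappa>: "\<kappa> > 0" using SC_scale_pos \<kappa>_def by simp
  have du: "(u has_real_derivative deriv u x) (at x) \<and> (deriv u has_real_derivative p * u x) (at x)"
    if "x \<in> I" for x
    using assms(2) ode that twice_differentiable_on_DERIV twice_differentiable_on_DERIV2 by metis
  have dS: "(S_fun p has_real_derivative \<kappa> * C_fun p x) (at x)
      \<and> ((\<lambda>x. \<kappa> * C_fun p x) has_real_derivative p * S_fun p x) (at x)" for x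
    using \<kappa> unfolding \<kappa>_def
    by (auto intro!: derivative_eq_intros has_real_derivative_S_fun has_real_derivative_C_fun)
  have dC: "(C_fun p has_real_derivative p / \<kappa> * S_fun p x) (at x)
      \<and> ((\<lambda>x. p / \<kappa> * S_fun p x) has_real_derivative p * C_fun p x) (at x)" for x
  proof
    show "(C_fun p has_real_derivative p / \<kappa> * S_fun p x) (at x)"
      unfolding \<kappa>_def by (rule has_real_derivative_C_fun)
    have "((\<lambda>x. p / \<kappa> * S_fun p x) has_real_derivative p / \<kappa> * (\<kappa> * C_fun p x)) (at x)"
      unfolding \<kappa>_def by (intro DERIV_cmult has_real_derivative_S_fun)
    then show "((\<lambda>x. p / \<kappa> * S_fun p x) has_real_derivative p * C_fun p x) (at x)"
      using \<kappa> by simp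
  qed
  obtain A where A: "\<forall>x\<in>I. u x * (p / \<kappa> * S_fun p x) - deriv u x * C_fun p x = A"
    using wronskian_constant[OF assms(1) du dC] by blast
  obtain B where B: "\<forall>x\<in>I. u x * (\<kappa> * C_fun p x) - deriv u x * S_fun p x = B"
    using wronskian_constant[OF assms(1) du dS] by blast
  show ?thesis
  proof (intro exI ballI)
    fix x assume x: "x \<in> I"
    have "A * S_fun p x - B * C_fun p x
        = (u x * (p / \<kappa> * S_fun p x) - deriv u x * C_fun p x) * S_fun p x
          - (u x * (\<kappa> * C_fun p x) - deriv u x * S_fun p x) * C_fun p x"
      using A B x by simp
    also have "\<dots> = - u x * (\<kappa>\<^sup>2 * (C_fun p x)\<^sup>2 - p * (S_fun p x)\<^sup>2) / \<kappa>"
      using \<kappa> by (simp add: field_simps power2_eq_square)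
    also have "\<dots> = - u x * \<kappa>"
      using C_fun_S_fun_pythagoras[of p x] \<kappa> unfolding \<kappa>_def by (simp add: power2_eq_square)
    finally show "u x = (- A / \<kappa>) * S_fun p x + (B / \<kappa>) * C_fun p x"
      using \<kappa> by (simp add: field_simps)
  qed
qed

definition mean_equation :: "real set \<Rightarrow> real \<Rightarrow> (real \<Rightarrow> real) \<Rightarrow> (real \<Rightarrow> real) \<Rightarrow> bool" where
  "mean_equation I t f \<phi> \<longleftrightarrow> (\<forall>x\<in>I. \<forall>y\<in>I.
      (t * f x + (1 - t) * f y) * \<phi> (t * x + (1 - t) * y) = t * f x * \<phi> x + (1 - t) * f y * \<phi> y)"

lemma mean_equation_if_pair_equiv:
  assumes "convex I" "0 < t" "t < 1" "\<forall>x\<in>I. f x \<noteq> 0" "(t - 1/2) * p = 0"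
    and "pair_equiv_on I f (\<lambda>x. f x * \<phi> x) (S_fun p) (C_fun p)"
  shows "mean_equation I t f \<phi>"
  unfolding mean_equation_def
proof (intro ballI)
  fix x y assume xy: "x \<in> I" "y \<in> I"
  define m where "m = t * x + (1 - t) * y"
  have m: "m \<in> I" using convexD[OF assms(1) xy, of t "1-t"] assms(2,3) by (simp add: m_def)
  obtain a b c d where abcd: "a * d \<noteq> c * b"
    and SC: "\<forall>x\<in>I. S_fun p x = a * f x + b * (f x * \<phi> x) \<and> C_fun p x = c * f x + d * (f x * \<phi> x)"
    using assms(6) unfolding pair_equiv_on_def by blast
  define F G where "F = t * f x + (1 - t) * f y" and "G = t * (f x * \<phi> x) + (1 - t) * (f y * \<phi> y)"
  have "(a * d - c * b) * (f m * G - (f m * \<phi> m) * F)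
      = S_fun p m * (t * C_fun p x + (1-t) * C_fun p y) - C_fun p m * (t * S_fun p x + (1-t) * S_fun p y)"
    using SC xy m unfolding F_def G_def by (simp add: algebra_simps)
  also have "\<dots> = 0"
    using S_fun_C_fun_mean_identity[OF assms(5), of x y] by (simp add: m_def)
  finally have "(a * d - c * b) * (f m * (G - \<phi> m * F)) = 0" by (simp add: algebra_simps)
  then have "f m * (G - \<phi> m * F) = 0" using abcd by simp
  then have "G = \<phi> m * F" using assms(4) m by simp
  then show "(t * f x + (1 - t) * f y) * \<phi> (t * x + (1 - t) * y) = t * f x * \<phi> x + (1 - t) * f y * \<phi> y"
    unfolding F_def G_def m_def by (simp add: algebra_simps)
qed

lemma pair_equiv_on_if_span:
  assumes f: "\<forall>x\<in>I. f x = a1 * h x + b1 * k x" and g: "\<forall>x\<in>I. g x = a2 * h x + b2 * k x"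
    and "a1 * b2 \<noteq> b1 * a2"
  shows "pair_equiv_on I f g h k"
  unfolding pair_equiv_on_def
proof (intro exI conjI ballI)
  define D where "D = a1 * b2 - b1 * a2"
  have "D \<noteq> 0" using assms(3) by (simp add: D_def)
  have "(b2 / D) * (a1 / D) - (- a2 / D) * (- b1 / D) = (a1 * b2 - b1 * a2) / (D * D)"
    using \<open>D \<noteq> 0\<close> by (simp add: field_simps)
  also have "\<dots> = 1 / D" using \<open>D \<noteq> 0\<close> by (simp add: D_def[symmetric])
  finally show "(b2 / D) * (a1 / D) \<noteq> (- a2 / D) * (- b1 / D)" using \<open>D \<noteq> 0\<close> by auto
  fix x assume "x \<in> I"
  have "b2 * f x - b1 * g x = D * h x" using f g \<open>x \<in> I\<close> by (simp add: D_def algebra_simps)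
  then show "h x = b2 / D * f x + - b1 / D * g x" using \<open>D \<noteq> 0\<close> by (simp add: field_simps)
  have "a1 * g x - a2 * f x = D * k x" using f g \<open>x \<in> I\<close> by (simp add: D_def algebra_simps)
  then show "k x = - a2 / D * f x + a1 / D * g x" using \<open>D \<noteq> 0\<close> by (simp add: field_simps)
qed

lemma pair_equiv_if_ode:
  fixes f \<phi> :: "real \<Rightarrow> real"
  assumes "open I" "convex I" and nonconst: "\<exists>x\<in>I. \<exists>y\<in>I. \<phi> x \<noteq> \<phi> y"
    and nz: "\<forall>x\<in>I. f x \<noteq> 0"
    and f: "twice_differentiable_on f I" and \<phi>: "twice_differentiable_on \<phi> I"
    and ode_\<phi>: "\<forall>x\<in>I. 2 * deriv f x * deriv \<phi> x + f x * deriv (deriv \<phi>) x = 0"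
    and ode_f: "\<forall>x\<in>I. deriv (deriv f) x = p * f x"
  shows "pair_equiv_on I f (\<lambda>x. f x * \<phi> x) (S_fun p) (C_fun p)"
proof -
  define g where "g x = f x * \<phi> x" for x
  have g: "twice_differentiable_on g I"
    unfolding g_def[abs_def] using twice_differentiable_on_mult[OF assms(1) f \<phi>] .
  have ode_g: "\<forall>x\<in>I. deriv (deriv g) x = p * g x"
    using deriv2_mult[OF assms(1) f \<phi>] ode_\<phi> ode_f unfolding g_def[abs_def] by (auto simp: algebra_simps)
  obtain a1 b1 where fr: "\<forall>x\<in>I. f x = a1 * S_fun p x + b1 * C_fun p x"
    using ode_solution_in_span_S_fun_C_fun[OF assms(2) f ode_f] by blast
  obtain a2 b2 where gr: "\<forall>x\<in>I. g x = a2 * S_fun p x + b2 * C_fun p x"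
    using ode_solution_in_span_S_fun_C_fun[OF assms(2) g ode_g] by blast
  have "a1 * b2 \<noteq> b1 * a2"
  proof
    assume det: "a1 * b2 = b1 * a2"
    have \<phi>_coeffs: "b2 = b1 * \<phi> x \<and> a2 = a1 * \<phi> x" if "x \<in> I" for x
    proof -
      have "b2 * f x - b1 * g x = (a1 * b2 - b1 * a2) * S_fun p x" using fr gr that by (simp add: algebra_simps)
      then have "f x * (b2 - b1 * \<phi> x) = 0" using det unfolding g_def by (simp add: algebra_simps)
      moreover have "a1 * g x - a2 * f x = (a1 * b2 - b1 * a2) * C_fun p x" using fr gr that by (simp add: algebra_simps)
      then have "f x * (a1 * \<phi> x - a2) = 0" using det unfolding g_def by (simp add: algebra_simps)
      ultimately show ?thesis using nz that by auto
    qed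
    obtain x y where "x \<in> I" "y \<in> I" "\<phi> x \<noteq> \<phi> y" using nonconst by blast
    then have "a1 = 0 \<and> b1 = 0" using \<phi>_coeffs by (metis mult_cancel_left)
    then show False using fr nz \<open>x \<in> I\<close> by auto
  qed
  with pair_equiv_on_if_span[OF fr gr] show ?thesis unfolding g_def[abs_def] by blast
qed

lemma mean_equation_increments:
  assumes "mean_equation I t f \<phi>" "x \<in> I" "y \<in> I"
  shows "t * f x * (\<phi> (t*x + (1-t)*y) - \<phi> x) = (1-t) * f y * (\<phi> y - \<phi> (t*x + (1-t)*y))"
proof -
  have "(t * f x + (1 - t) * f y) * \<phi> (t*x + (1-t)*y) = t * f x * \<phi> x + (1 - t) * f y * \<phi> y"
    using assms unfolding mean_equation_def by blast
  then show ?thesis by (simp add: algebra_simps)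
qed

lemma mean_equation_uminus: "mean_equation I t f (\<lambda>x. - \<phi> x) \<longleftrightarrow> mean_equation I t f \<phi>"
  unfolding mean_equation_def by (auto simp: algebra_simps)

lemma mean_equation_reflect:
  assumes "mean_equation I t f \<phi>"
  shows "mean_equation (uminus ` I) t (\<lambda>x. f (- x)) (\<lambda>x. \<phi> (- x))"
  unfolding mean_equation_def
proof (intro ballI)
  fix x y assume "x \<in> uminus ` I" "y \<in> uminus ` I"
  then have "- x \<in> I" "- y \<in> I" by auto
  moreover have "- (t * x + (1 - t) * y) = t * (- x) + (1 - t) * (- y)" by simp
  ultimately show "(t * f (- x) + (1 - t) * f (- y)) * \<phi> (- (t * x + (1 - t) * y))
      = t * f (- x) * \<phi> (- x) + (1 - t) * f (- y) * \<phi> (- y)"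
    using assms unfolding mean_equation_def by metis
qed

lemma mean_equation_nonzero:
  assumes "mean_equation I t f \<phi>" "inj_on \<phi> I" "convex I" "0 < t" "t < 1" "\<exists>x\<in>I. f x \<noteq> 0"
  shows "\<forall>x\<in>I. f x \<noteq> 0"
proof (rule ccontr)
  assume "\<not> (\<forall>x\<in>I. f x \<noteq> 0)"
  then obtain y where y: "y \<in> I" "f y = 0" by blast
  obtain x where x: "x \<in> I" "f x \<noteq> 0" using assms(6) by blast
  have m: "t * x + (1 - t) * y \<in> I"
    using convexD[OF assms(3) x(1) y(1), of t "1 - t"] assms(4,5) by simp
  have "t * f x * (\<phi> (t * x + (1 - t) * y) - \<phi> x) = 0"
    using mean_equation_increments[OF assms(1) x(1) y(1)] y(2) by simp
  then have "\<phi> (t * x + (1 - t) * y) = \<phi> x" using assms(4) x(2) by simp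
  then have "t * x + (1 - t) * y = x" using inj_onD[OF assms(2)] m x(1) by blast
  then have "(1 - t) * (y - x) = 0" by (simp add: algebra_simps)
  then show False using assms(5) x y by simp
qed

lemma mono_on_small_contraction_gap:
  fixes \<psi> :: "real \<Rightarrow> real"
  assumes "0 < s" "s < 1" "\<gamma> > 0" "j < y1" "mono_on {j..y1} \<psi>"
  shows "\<exists>y. j < y \<and> y \<le> y1 \<and> \<psi> y - \<psi> (j + s * (y - j)) < \<gamma>"
proof (rule ccontr)
  assume "\<not> ?thesis"
  then have gap: "\<gamma> \<le> \<psi> y - \<psi> (j + s * (y - j))" if "j < y" "y \<le> y1" for y
    using that by force
  define ys where "ys n = j + s ^ n * (y1 - j)" for n
  have ys: "j < ys n \<and> ys n \<le> y1" for n
  proof -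
    have "s ^ n * (y1 - j) \<le> y1 - j"
      using assms by (intro mult_left_le_one_le power_le_one) auto
    moreover have "0 < s ^ n * (y1 - j)" using assms by simp
    ultimately show ?thesis unfolding ys_def by linarith
  qed
  have ys_Suc: "j + s * (ys n - j) = ys (Suc n)" for n
    unfolding ys_def by simp
  have telescope: "real n * \<gamma> \<le> \<psi> y1 - \<psi> (ys n)" for n
  proof (induction n)
    case 0
    then show ?case by (simp add: ys_def)
  next
    case (Suc n)
    then show ?case using gap[of "ys n"] ys[of n] ys_Suc[of n] by (simp add: algebra_simps)
  qed
  obtain n where n: "\<psi> y1 - \<psi> j < real n * \<gamma>"
    using reals_Archimedean3[OF assms(3)] by blast
  have "\<psi> j \<le> \<psi> (ys n)"
    using ys[of n] assms(4) by (intro mono_onD[OF assms(5)]) auto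
  then show False using telescope[of n] n by simp
qed

lemma is_interval_real_between:
  fixes I :: "real set"
  shows "is_interval I \<Longrightarrow> a \<in> I \<Longrightarrow> b \<in> I \<Longrightarrow> a \<le> z \<Longrightarrow> z \<le> b \<Longrightarrow> z \<in> I"
  unfolding is_interval_1 by blast

lemma open_points_around:
  fixes I :: "real set"
  assumes "open I" "0 < t" "t < 1" "j \<in> I"
  obtains x0 y1 where "x0 \<in> I" "y1 \<in> I" "x0 < j" "j < y1" "t * x0 + (1 - t) * y1 < j"
proof -
  obtain r where r: "r > 0" "ball j r \<subseteq> I" using openE[OF assms(1,4)] by blast
  define x0 where "x0 = j - r/2"
  define y1 where "y1 = j + min (r/2) (t * (j - x0) / (2 * (1 - t)))"
  have "x0 \<in> I" "x0 < j" using r by (auto simp: x0_def dist_real_def)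
  moreover have "y1 \<in> I" "j < y1" using r assms(2,3) \<open>x0 < j\<close> by (auto simp: y1_def dist_real_def)
  moreover have "t * x0 + (1 - t) * y1 < j"
  proof -
    have "y1 - j \<le> t * (j - x0) / (2 * (1 - t))" by (simp add: y1_def)
    then have "(1 - t) * (y1 - j) \<le> t * (j - x0) / 2" using assms(2,3) by (simp add: field_simps)
    moreover have "0 < t * (j - x0)" using assms(2) \<open>x0 < j\<close> by simp
    moreover have "t * x0 + (1 - t) * y1 = j - t * (j - x0) + (1 - t) * (y1 - j)"
      by (simp add: algebra_simps)
    ultimately show ?thesis by linarith
  qed
  ultimately show thesis using that by blast
qed

lemma mean_equation_bounded_right:
  fixes \<psi> f :: "real \<Rightarrow> real"
  assumes "open I" "is_interval I" "strict_mono_on I \<psi>" "mean_equation I t f \<psi>"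
    and t: "0 < t" "t < 1" and j: "j \<in> I"
  obtains y1 B where "j < y1" "y1 \<in> I" "\<And>y. j < y \<Longrightarrow> y \<le> y1 \<Longrightarrow> \<bar>f y\<bar> \<le> B"
proof -
  note between = is_interval_real_between[OF assms(2)]
  note mono = strict_mono_onD[OF assms(3)]
  obtain x0 y1 where x0: "x0 \<in> I" "x0 < j" and y1: "y1 \<in> I" "j < y1"
    and c: "t * x0 + (1 - t) * y1 < j"
    using open_points_around[OF assms(1) t j] by blast
  define c where "c = t * x0 + (1 - t) * y1"
  have "c - x0 = (1 - t) * (y1 - x0)" by (simp add: c_def algebra_simps)
  moreover have "0 < (1 - t) * (y1 - x0)" using t x0 y1 by simp
  ultimately have "x0 < c" by linarith
  then have cI: "c \<in> I" using between[OF x0(1) j] c unfolding c_def by simp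
  define k0 where "k0 = \<psi> j - \<psi> c"
  have k0: "k0 > 0" using mono[OF cI j] c unfolding k0_def c_def by simp
  show thesis
  proof (rule that[OF y1(2,1)])
    fix y assume y: "j < y" "y \<le> y1"
    have yI: "y \<in> I" using between[OF j y1(1)] y by simp
    define m where "m = t * x0 + (1 - t) * y"
    have "m - x0 = (1 - t) * (y - x0)" by (simp add: m_def algebra_simps)
    moreover have "0 < (1 - t) * (y - x0)" using t x0 y by simp
    ultimately have m1: "x0 < m" by linarith
    have "c - m = (1 - t) * (y1 - y)" by (simp add: m_def c_def algebra_simps)
    moreover have "0 \<le> (1 - t) * (y1 - y)" using t y by simp
    ultimately have m2: "m \<le> c" by linarith
    have mI: "m \<in> I" using between[OF x0(1) cI] m1 m2 by simp
    have "\<psi> m \<le> \<psi> c" using mono[OF mI cI] m2 by (cases "m = c") auto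
    moreover have "\<psi> j < \<psi> y" using mono[OF j yI y(1)] .
    ultimately have far: "k0 \<le> \<psi> y - \<psi> m" unfolding k0_def by simp
    have "\<psi> m \<le> \<psi> y1" using mono[OF mI y1(1)] m2 c y1(2) unfolding c_def by simp
    then have near: "0 \<le> \<psi> m - \<psi> x0" "\<psi> m - \<psi> x0 \<le> \<psi> y1 - \<psi> x0"
      using mono[OF x0(1) mI m1] by simp_all
    have "(1 - t) * \<bar>f y\<bar> * k0 \<le> (1 - t) * \<bar>f y\<bar> * (\<psi> y - \<psi> m)"
      using far t by (simp add: mult_left_mono)
    also have "\<dots> = \<bar>t * f x0 * (\<psi> m - \<psi> x0)\<bar>"
      using mean_equation_increments[OF assms(4) x0(1) yI] far k0 t
      unfolding m_def by (simp add: abs_mult)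
    also have "\<dots> \<le> t * \<bar>f x0\<bar> * (\<psi> y1 - \<psi> x0)"
      using near t by (simp add: abs_mult mult_left_mono)
    finally show "\<bar>f y\<bar> \<le> t * \<bar>f x0\<bar> * (\<psi> y1 - \<psi> x0) / ((1 - t) * k0)"
      using t k0 by (simp add: field_simps)
  qed
qed

text \<open>If \<psi> jumped by \<epsilon> to the right of j, the increments identity at x = j, together with the
  local bound on f, would force a uniform gap \<psi> y - \<psi>(j + (1-t)(y-j)) \<ge> \<gamma>, which
  mono_on_small_contraction_gap excludes.\<close>

lemma mean_equation_right_approach:
  fixes \<psi> f :: "real \<Rightarrow> real"
  assumes "open I" "is_interval I" "strict_mono_on I \<psi>" "mean_equation I t f \<psi>"
    and nz: "\<forall>x\<in>I. f x \<noteq> 0" and t: "0 < t" "t < 1" and j: "j \<in> I" and "\<epsilon> > 0"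
  shows "\<exists>u\<in>I. j < u \<and> \<psi> u < \<psi> j + \<epsilon>"
proof (rule ccontr)
  assume "\<not> ?thesis"
  then have jump: "\<psi> j + \<epsilon> \<le> \<psi> u" if "u \<in> I" "j < u" for u
    using that by force
  note between = is_interval_real_between[OF assms(2)]
  note mono = strict_mono_onD[OF assms(3)]
  obtain y1 B where y1: "j < y1" "y1 \<in> I" and B: "\<And>y. j < y \<Longrightarrow> y \<le> y1 \<Longrightarrow> \<bar>f y\<bar> \<le> B"
    using mean_equation_bounded_right[OF assms(1-4) t j] by blast
  define B' where "B' = max B 1"
  have B': "B' > 0" "\<And>y. j < y \<Longrightarrow> y \<le> y1 \<Longrightarrow> \<bar>f y\<bar> \<le> B'"
    using B unfolding B'_def by force+
  define \<gamma> where "\<gamma> = t * \<bar>f j\<bar> * \<epsilon> / ((1 - t) * B')"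
  have "\<gamma> > 0" using t nz j \<open>\<epsilon> > 0\<close> B' unfolding \<gamma>_def by simp
  have "mono_on {j..y1} \<psi>"
    using mono between[OF j y1(2)] by (intro mono_onI) (metis atLeastAtMost_iff order.order_iff_strict)
  then obtain y where y: "j < y" "y \<le> y1" and small: "\<psi> y - \<psi> (j + (1 - t) * (y - j)) < \<gamma>"
    using mono_on_small_contraction_gap[of "1 - t" \<gamma> j y1 \<psi>] t \<open>\<gamma> > 0\<close> y1(1) by auto
  define m where "m = t * j + (1 - t) * y"
  have "m - j = (1 - t) * (y - j)" by (simp add: m_def algebra_simps)
  moreover have "0 < (1 - t) * (y - j)" using t y by simp
  ultimately have m1: "j < m" by linarith
  have "y - m = t * (y - j)" by (simp add: m_def algebra_simps)
  moreover have "0 < t * (y - j)" using t y by simp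
  ultimately have m2: "m < y" by linarith
  note m = m1 m2
  have yI: "y \<in> I" using between[OF j y1(2)] y by simp
  have mI: "m \<in> I" using between[OF j yI] m by simp
  have rise: "\<epsilon> \<le> \<psi> m - \<psi> j" using jump[OF mI m(1)] by simp
  have pos: "0 < \<psi> y - \<psi> m" using mono[OF mI yI m(2)] by simp
  have "t * \<bar>f j\<bar> * \<epsilon> \<le> t * \<bar>f j\<bar> * (\<psi> m - \<psi> j)"
    using rise t by (simp add: mult_left_mono)
  also have "\<dots> = (1 - t) * \<bar>f y\<bar> * (\<psi> y - \<psi> m)"
    using arg_cong[OF mean_equation_increments[OF assms(4) j yI], of abs] rise pos t \<open>\<epsilon> > 0\<close>
    unfolding m_def by (simp add: abs_mult)
  also have "\<dots> \<le> (1 - t) * B' * (\<psi> y - \<psi> m)"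
    using B'(2)[OF y] pos t by (simp add: mult_right_mono)
  also have "\<dots> < (1 - t) * B' * \<gamma>"
  proof (rule mult_strict_left_mono)
    have "j + (1 - t) * (y - j) = m" by (simp add: m_def algebra_simps)
    then show "\<psi> y - \<psi> m < \<gamma>" using small by simp
  qed (use B'(1) t in simp)
  also have "\<dots> = t * \<bar>f j\<bar> * \<epsilon>"
    using B'(1) t unfolding \<gamma>_def by simp
  finally show False by simp
qed

lemma mean_equation_strict_mono_isCont:
  fixes \<psi> f :: "real \<Rightarrow> real"
  assumes "open I" "is_interval I" "strict_mono_on I \<psi>" "mean_equation I t f \<psi>"
    and nz: "\<forall>x\<in>I. f x \<noteq> 0" and t: "0 < t" "t < 1" and j: "j \<in> I"
  shows "isCont \<psi> j"
  unfolding continuous_at_eps_delta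
proof (intro allI impI)
  fix \<epsilon> :: real assume "\<epsilon> > 0"
  obtain uR where uR: "uR \<in> I" "j < uR" "\<psi> uR < \<psi> j + \<epsilon>"
    using mean_equation_right_approach[OF assms(1-4) nz t j \<open>\<epsilon> > 0\<close>] by blast
  have "\<exists>u\<in>uminus ` I. - j < u \<and> - \<psi> (- u) < - \<psi> (- (- j)) + \<epsilon>"
  proof (rule mean_equation_right_approach[where f = "\<lambda>x. f (- x)"])
    show "strict_mono_on (uminus ` I) (\<lambda>x. - \<psi> (- x))"
      using assms(3) by (auto simp: strict_mono_on_def)
    show "mean_equation (uminus ` I) t (\<lambda>x. f (- x)) (\<lambda>x. - \<psi> (- x))"
      using mean_equation_reflect[OF assms(4)] by (simp only: mean_equation_uminus)
  qed (use assms \<open>\<epsilon> > 0\<close> in \<open>auto simp: open_negations\<close>)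
  then obtain uL where uL: "uL \<in> I" "uL < j" "\<psi> j - \<epsilon> < \<psi> uL"
    by (auto simp: minus_less_iff)
  show "\<exists>d>0. \<forall>x. dist x j < d \<longrightarrow> dist (\<psi> x) (\<psi> j) < \<epsilon>"
  proof (intro exI[of _ "min (uR - j) (j - uL)"] conjI allI impI)
    show "min (uR - j) (j - uL) > 0" using uR uL by simp
    fix x assume "dist x j < min (uR - j) (j - uL)"
    then have x: "uL < x" "x < uR" by (auto simp: dist_real_def abs_less_iff)
    have xI: "x \<in> I" using is_interval_real_between[OF assms(2) uL(1) uR(1)] x by simp
    have "\<psi> uL < \<psi> x" "\<psi> x < \<psi> uR"
      using strict_mono_onD[OF assms(3)] uL(1) uR(1) xI x by auto
    then show "dist (\<psi> x) (\<psi> j) < \<epsilon>" using uL uR by (auto simp: dist_real_def abs_less_iff)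
  qed
qed

lemma mean_equation_continuous_on_phi:
  fixes \<phi> f :: "real \<Rightarrow> real"
  assumes "open I" "is_interval I" "strict_mono_on I \<phi> \<or> strict_antimono_on I \<phi>"
    and "mean_equation I t f \<phi>" "\<forall>x\<in>I. f x \<noteq> 0" "0 < t" "t < 1"
  shows "continuous_on I \<phi>"
proof (intro continuous_at_imp_continuous_on ballI)
  fix j assume j: "j \<in> I"
  show "isCont \<phi> j"
  proof (cases "strict_mono_on I \<phi>")
    case True
    then show ?thesis using mean_equation_strict_mono_isCont assms j by blast
  next
    case False
    then have "strict_mono_on I (\<lambda>x. - \<phi> x)"
      using assms(3) by (auto simp: strict_mono_on_def monotone_on_def)
    moreover have "mean_equation I t f (\<lambda>x. - \<phi> x)"
      using assms(4) by (simp only: mean_equation_uminus)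
    ultimately have "isCont (\<lambda>x. - (- \<phi> x)) j"
      using mean_equation_strict_mono_isCont assms j continuous_minus by blast
    then show ?thesis by simp
  qed
qed

text \<open>If F' = f then window t s F m is the integral over \<sigma> \<in> [0, s] of
  t f(m - (1-t)\<sigma>) + (1-t) f(m + t\<sigma>), i.e. the integral of the f-weights of the equation over
  all pairs with weighted mean m.\<close>

definition window :: "real \<Rightarrow> real \<Rightarrow> (real \<Rightarrow> real) \<Rightarrow> real \<Rightarrow> real" where
  "window t s F m = t / (1 - t) * (F m - F (m - (1 - t) * s)) + (1 - t) / t * (F (m + t * s) - F m)"

lemma has_real_derivative_window_width:
  fixes F f :: "real \<Rightarrow> real"
  assumes "0 < t" "t < 1"
    and "(F has_real_derivative f (m - (1 - t) * s)) (at (m - (1 - t) * s))"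
    and "(F has_real_derivative f (m + t * s)) (at (m + t * s))"
  shows "((\<lambda>s. window t s F m) has_real_derivative
           t * f (m - (1 - t) * s) + (1 - t) * f (m + t * s)) (at s)"
proof -
  have "((\<lambda>s. F (m - (1 - t) * s)) has_real_derivative f (m - (1 - t) * s) * (- (1 - t))) (at s)"
    by (rule DERIV_chain2[where g = "\<lambda>s. m - (1 - t) * s", OF assms(3)])
      (auto intro!: derivative_eq_intros)
  moreover have "((\<lambda>s. F (m + t * s)) has_real_derivative f (m + t * s) * t) (at s)"
    by (rule DERIV_chain2[where g = "\<lambda>s. m + t * s", OF assms(4)]) (auto intro!: derivative_eq_intros)
  ultimately have "((\<lambda>s. window t s F m) has_real_derivative
      t / (1 - t) * (0 - f (m - (1 - t) * s) * (- (1 - t))) + (1 - t) / t * (f (m + t * s) * t - 0)) (at s)"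
    unfolding window_def by (intro DERIV_add DERIV_cmult DERIV_diff DERIV_const) simp_all
  then show ?thesis
    by (rule DERIV_cong) (use assms(1,2) in \<open>simp add: field_simps\<close>)
qed

lemma has_real_derivative_window:
  fixes F f :: "real \<Rightarrow> real"
  assumes "(F has_real_derivative f m) (at m)"
    and "(F has_real_derivative f (m - (1 - t) * s)) (at (m - (1 - t) * s))"
    and "(F has_real_derivative f (m + t * s)) (at (m + t * s))"
  shows "(window t s F has_real_derivative window t s f m) (at m)"
proof -
  have "((\<lambda>m. F (m - (1 - t) * s)) has_real_derivative f (m - (1 - t) * s) * 1) (at m)"
    by (rule DERIV_chain2[where g = "\<lambda>m. m - (1 - t) * s", OF assms(2)]) (auto intro!: derivative_eq_intros)
  moreover have "((\<lambda>m. F (m + t * s)) has_real_derivative f (m + t * s) * 1) (at m)"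
    by (rule DERIV_chain2[where g = "\<lambda>m. m + t * s", OF assms(3)]) (auto intro!: derivative_eq_intros)
  ultimately show ?thesis
    unfolding window_def[abs_def] using assms(1) by (intro DERIV_add DERIV_cmult DERIV_diff) simp_all
qed

lemma window_mean_value:
  fixes F f :: "real \<Rightarrow> real"
  assumes "0 < t" "t < 1" "0 < s"
    and F: "\<And>z. m - (1 - t) * s \<le> z \<Longrightarrow> z \<le> m + t * s \<Longrightarrow> (F has_real_derivative f z) (at z)"
  obtains z1 z2 where "z1 \<in> {m - (1 - t) * s .. m + t * s}" "z2 \<in> {m - (1 - t) * s .. m + t * s}"
    "window t s F m = s * (t * f z1 + (1 - t) * f z2)"
proof -
  have "0 < (1 - t) * s" "0 < t * s" using assms by simp_all
  obtain z1 where z1: "m - (1 - t) * s < z1" "z1 < m"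
    and F1: "F m - F (m - (1 - t) * s) = (m - (m - (1 - t) * s)) * f z1"
    using MVT2[of "m - (1 - t) * s" m F f] F \<open>0 < (1 - t) * s\<close> \<open>0 < t * s\<close> by auto
  obtain z2 where z2: "m < z2" "z2 < m + t * s"
    and F2: "F (m + t * s) - F m = (m + t * s - m) * f z2"
    using MVT2[of m "m + t * s" F f] F \<open>0 < (1 - t) * s\<close> \<open>0 < t * s\<close> by auto
  show thesis
  proof (rule that)
    show "z1 \<in> {m - (1 - t) * s .. m + t * s}" "z2 \<in> {m - (1 - t) * s .. m + t * s}"
      using z1 z2 by auto
    show "window t s F m = s * (t * f z1 + (1 - t) * f z2)"
      unfolding window_def F1 F2 using assms(1,2) by (simp add: field_simps)
  qed
qed

lemma window_mean_equation:
  fixes F G f g :: "real \<Rightarrow> real"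
  assumes "0 < t" "t < 1" "0 < s"
    and F: "\<And>z. m - (1 - t) * s \<le> z \<Longrightarrow> z \<le> m + t * s \<Longrightarrow> (F has_real_derivative f z) (at z)"
    and G: "\<And>z. m - (1 - t) * s \<le> z \<Longrightarrow> z \<le> m + t * s \<Longrightarrow> (G has_real_derivative g z) (at z)"
    and eq: "\<And>\<sigma>. 0 \<le> \<sigma> \<Longrightarrow> \<sigma> \<le> s \<Longrightarrow>
       c * (t * f (m - (1 - t) * \<sigma>) + (1 - t) * f (m + t * \<sigma>))
         = t * g (m - (1 - t) * \<sigma>) + (1 - t) * g (m + t * \<sigma>)"
  shows "c * window t s F m = window t s G m"
proof -
  define K where "K \<sigma> = c * window t \<sigma> F m - window t \<sigma> G m" for \<sigma>
  have K': "(K has_real_derivative 0) (at \<sigma>)" if "0 \<le> \<sigma>" "\<sigma> \<le> s" for \<sigma>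
  proof -
    have "0 \<le> (1 - t) * \<sigma>" "0 \<le> t * \<sigma>" "(1 - t) * \<sigma> \<le> (1 - t) * s" "t * \<sigma> \<le> t * s"
      using assms(1,2) that by (simp_all add: mult_left_mono)
    then have x: "m - (1 - t) * s \<le> m - (1 - t) * \<sigma>" "m - (1 - t) * \<sigma> \<le> m + t * s"
      and y: "m - (1 - t) * s \<le> m + t * \<sigma>" "m + t * \<sigma> \<le> m + t * s"
      by linarith+
    have "(K has_real_derivative
        c * (t * f (m - (1 - t) * \<sigma>) + (1 - t) * f (m + t * \<sigma>))
          - (t * g (m - (1 - t) * \<sigma>) + (1 - t) * g (m + t * \<sigma>))) (at \<sigma>)"
      unfolding K_def using assms(1,2)
      by (intro DERIV_diff DERIV_cmult has_real_derivative_window_width F[OF x] F[OF y] G[OF x] G[OF y])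
    then show ?thesis using eq[OF that] by simp
  qed
  have "K s = K 0"
  proof (rule DERIV_isconst_end[OF assms(3)])
    show "continuous_on {0..s} K"
      by (intro continuous_at_imp_continuous_on ballI DERIV_isCont[OF K']) auto
  qed (use K' in auto)
  then show ?thesis by (simp add: K_def window_def)
qed

lemma continuous_on_local_antiderivative:
  fixes f :: "real \<Rightarrow> real"
  assumes "open I" "continuous_on I f" "m0 \<in> I"
  obtains r F where "r > 0" "ball m0 r \<subseteq> I" "\<And>z. z \<in> ball m0 r \<Longrightarrow> (F has_real_derivative f z) (at z)"
proof -
  obtain r where r: "r > 0" "cball m0 r \<subseteq> I" using open_contains_cball assms(1,3) by blast
  have cont: "continuous_on {m0 - r..m0 + r} f"
    using continuous_on_subset[OF assms(2)] r(2) by (simp add: cball_eq_atLeastAtMost)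
  show thesis
  proof (rule that[OF r(1)])
    show "ball m0 r \<subseteq> I" using r(2) by auto
    fix z assume "z \<in> ball m0 r"
    then have z: "m0 - r < z" "z < m0 + r" by (auto simp: dist_real_def)
    then show "((\<lambda>u. integral {m0 - r..u} f) has_real_derivative f z) (at z)"
      using integral_has_real_derivative[OF cont, of z] at_within_Icc_at[of "m0 - r" z "m0 + r"] by simp
  qed
qed

lemma weighted_equation_window_quotient:
  fixes f g \<phi> F G :: "real \<Rightarrow> real"
  assumes "0 < t" "t < 1" "\<eta> > 0"
    and win: "\<And>z. m - (1 - t) * \<eta> \<le> z \<Longrightarrow> z \<le> m + t * \<eta> \<Longrightarrow>
       z \<in> I \<and> (F has_real_derivative f z) (at z) \<and> (G has_real_derivative g z) (at z)"
    and eq: "\<forall>x\<in>I. \<forall>y\<in>I. \<phi> (t * x + (1 - t) * y) * (t * f x + (1 - t) * f y) = t * g x + (1 - t) * g y"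
    and nz: "\<forall>x\<in>I. \<forall>y\<in>I. t * f x + (1 - t) * f y \<noteq> 0"
  shows "window t \<eta> F m \<noteq> 0 \<and> \<phi> m = window t \<eta> G m / window t \<eta> F m"
proof -
  obtain z1 z2 where z: "z1 \<in> {m - (1 - t) * \<eta> .. m + t * \<eta>}" "z2 \<in> {m - (1 - t) * \<eta> .. m + t * \<eta>}"
    and window_F: "window t \<eta> F m = \<eta> * (t * f z1 + (1 - t) * f z2)"
    using window_mean_value[OF assms(1-3), of m F f] win by blast
  have "window t \<eta> F m \<noteq> 0" using window_F nz win z \<open>\<eta> > 0\<close> by auto
  moreover have "\<phi> m * window t \<eta> F m = window t \<eta> G m"
  proof (rule window_mean_equation[OF assms(1-3)])
    fix \<sigma> assume \<sigma>: "0 \<le> \<sigma>" "\<sigma> \<le> \<eta>"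
    have "m - (1 - t) * \<eta> \<le> m - (1 - t) * \<sigma>" "m + t * \<sigma> \<le> m + t * \<eta>"
      using assms(1,2) \<sigma> by (simp_all add: mult_left_mono)
    moreover have "m - (1 - t) * \<sigma> \<le> m + t * \<sigma>"
      using assms(1,2) \<sigma> mult_nonneg_nonneg[of "1 - t" \<sigma>] mult_nonneg_nonneg[of t \<sigma>] by linarith
    ultimately have "m - (1 - t) * \<sigma> \<in> I" "m + t * \<sigma> \<in> I" using win by auto
    moreover have "t * (m - (1 - t) * \<sigma>) + (1 - t) * (m + t * \<sigma>) = m" by (simp add: algebra_simps)
    ultimately show "\<phi> m * (t * f (m - (1 - t) * \<sigma>) + (1 - t) * f (m + t * \<sigma>))
        = t * g (m - (1 - t) * \<sigma>) + (1 - t) * g (m + t * \<sigma>)"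
      using eq by metis
  qed (use win in auto)
  ultimately show ?thesis by (simp add: field_simps)
qed

lemma weighted_equation_local_quotient:
  fixes f g \<phi> :: "real \<Rightarrow> real"
  assumes "open I" "0 < t" "t < 1" "continuous_on I f" "continuous_on I g"
    and eq: "\<forall>x\<in>I. \<forall>y\<in>I. \<phi> (t * x + (1 - t) * y) * (t * f x + (1 - t) * f y) = t * g x + (1 - t) * g y"
    and nz: "\<forall>x\<in>I. \<forall>y\<in>I. t * f x + (1 - t) * f y \<noteq> 0" and "m0 \<in> I"
  obtains N \<eta> F G where "open N" "m0 \<in> N" "\<eta> > 0"
    "\<And>m z. m \<in> N \<Longrightarrow> m - (1 - t) * \<eta> \<le> z \<Longrightarrow> z \<le> m + t * \<eta> \<Longrightarrow>
       z \<in> I \<and> (F has_real_derivative f z) (at z) \<and> (G has_real_derivative g z) (at z)"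
    "\<And>m. m \<in> N \<Longrightarrow> window t \<eta> F m \<noteq> 0 \<and> \<phi> m = window t \<eta> G m / window t \<eta> F m"
proof -
  obtain r1 F where r1: "r1 > 0" "ball m0 r1 \<subseteq> I"
    and F: "\<And>z. z \<in> ball m0 r1 \<Longrightarrow> (F has_real_derivative f z) (at z)"
    using continuous_on_local_antiderivative[OF assms(1,4,8)] by blast
  obtain r2 G where r2: "r2 > 0" "ball m0 r2 \<subseteq> I"
    and G: "\<And>z. z \<in> ball m0 r2 \<Longrightarrow> (G has_real_derivative g z) (at z)"
    using continuous_on_local_antiderivative[OF assms(1,5,8)] by blast
  define r where "r = min r1 r2"
  define \<eta> where "\<eta> = r / 4"
  have "r > 0" "\<eta> > 0" using r1 r2 by (simp_all add: r_def \<eta>_def)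
  have inner: "z \<in> I \<and> (F has_real_derivative f z) (at z) \<and> (G has_real_derivative g z) (at z)"
    if "m \<in> ball m0 (r / 2)" "m - (1 - t) * \<eta> \<le> z" "z \<le> m + t * \<eta>" for m z
  proof -
    have "(1 - t) * \<eta> \<le> \<eta>" "t * \<eta> \<le> \<eta>" using assms(2,3) \<open>\<eta> > 0\<close> by simp_all
    then have "m - \<eta> \<le> z" "z \<le> m + \<eta>" using that(2,3) by linarith+
    moreover have "\<bar>m0 - m\<bar> < r / 2" using that(1) by (simp add: dist_real_def)
    ultimately have "dist m0 z < r" unfolding dist_real_def \<eta>_def by linarith
    then show ?thesis using r1 r2 F G unfolding r_def by auto
  qed
  show thesis
  proof (rule that[of "ball m0 (r / 2)" \<eta>, OF _ _ \<open>\<eta> > 0\<close> inner])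
    fix m assume "m \<in> ball m0 (r / 2)"
    then show "window t \<eta> F m \<noteq> 0 \<and> \<phi> m = window t \<eta> G m / window t \<eta> F m"
      by (intro weighted_equation_window_quotient[OF assms(2,3) \<open>\<eta> > 0\<close> inner eq nz])
  qed (use \<open>r > 0\<close> in auto)
qed

lemma weighted_equation_differentiable:
  fixes f g \<phi> :: "real \<Rightarrow> real"
  assumes "open I" "0 < t" "t < 1" "continuous_on I f" "continuous_on I g"
    and eq: "\<forall>x\<in>I. \<forall>y\<in>I. \<phi> (t * x + (1 - t) * y) * (t * f x + (1 - t) * f y) = t * g x + (1 - t) * g y"
    and nz: "\<forall>x\<in>I. \<forall>y\<in>I. t * f x + (1 - t) * f y \<noteq> 0" and "m0 \<in> I"
  shows "\<phi> differentiable (at m0)"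
    and "\<forall>x\<in>I. f differentiable (at x) \<and> g differentiable (at x) \<Longrightarrow> deriv \<phi> differentiable (at m0)"
proof -
  obtain N \<eta> F G where N: "open N" "m0 \<in> N" and "\<eta> > 0"
    and inner: "\<And>m z. m \<in> N \<Longrightarrow> m - (1 - t) * \<eta> \<le> z \<Longrightarrow> z \<le> m + t * \<eta> \<Longrightarrow>
       z \<in> I \<and> (F has_real_derivative f z) (at z) \<and> (G has_real_derivative g z) (at z)"
    and quot: "\<And>m. m \<in> N \<Longrightarrow> window t \<eta> F m \<noteq> 0 \<and> \<phi> m = window t \<eta> G m / window t \<eta> F m"
    using weighted_equation_local_quotient[OF assms] by blast
  have ends: "m - (1 - t) * \<eta> \<le> m" "m \<le> m + t * \<eta>" for m
    using assms(2,3) \<open>\<eta> > 0\<close> by simp_all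
  note at_mid = inner[OF _ ends]
  note at_left = inner[OF _ order_refl order_trans[OF ends]]
  note at_right = inner[OF _ order_trans[OF ends] order_refl]
  have dF: "(window t \<eta> F has_real_derivative window t \<eta> f m) (at m)"
    and dG: "(window t \<eta> G has_real_derivative window t \<eta> g m) (at m)" if "m \<in> N" for m
    using at_mid[OF that] at_left[OF that] at_right[OF that] by (simp_all add: has_real_derivative_window)
  define R where "R m = (window t \<eta> g m * window t \<eta> F m - window t \<eta> G m * window t \<eta> f m)
                          / (window t \<eta> F m * window t \<eta> F m)" for m
  have d\<phi>: "(\<phi> has_real_derivative R m) (at m)" if "m \<in> N" for m
  proof -
    have "\<forall>z\<in>N. \<phi> z = window t \<eta> G z / window t \<eta> F z" using quot by blast
    then have "eventually (\<lambda>m. \<phi> m = window t \<eta> G m / window t \<eta> F m) (nhds m)"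
      by (rule eventually_eq_on_open[OF N(1) that])
    moreover have "((\<lambda>m. window t \<eta> G m / window t \<eta> F m) has_real_derivative R m) (at m)"
      unfolding R_def using quot[OF that] by (intro DERIV_divide dG[OF that] dF[OF that]) simp
    ultimately show ?thesis by (subst DERIV_cong_ev[OF refl _ refl])
  qed
  then show "\<phi> differentiable (at m0)" using N(2) real_differentiable_def by blast
  assume fg: "\<forall>x\<in>I. f differentiable (at x) \<and> g differentiable (at x)"
  have "(f has_real_derivative deriv f z) (at z)" "(g has_real_derivative deriv g z) (at z)" if "z \<in> I" for z
    using fg that DERIV_deriv_iff_real_differentiable by blast+
  then have "(window t \<eta> f has_real_derivative window t \<eta> (deriv f) m0) (at m0)"
    "(window t \<eta> g has_real_derivative window t \<eta> (deriv g) m0) (at m0)"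
    using at_mid[OF N(2)] at_left[OF N(2)] at_right[OF N(2)] by (simp_all add: has_real_derivative_window)
  then have "window t \<eta> f differentiable (at m0)" "window t \<eta> g differentiable (at m0)"
    using real_differentiable_def by blast+
  moreover have "window t \<eta> F differentiable (at m0)" "window t \<eta> G differentiable (at m0)"
    using dF[OF N(2)] dG[OF N(2)] real_differentiable_def by blast+
  ultimately have "R differentiable (at m0)"
    unfolding R_def[abs_def] using quot[OF N(2)] by (intro derivative_intros) auto
  moreover have "\<forall>m\<in>N. deriv \<phi> m = R m" using d\<phi> DERIV_imp_deriv by blast
  then have "eventually (\<lambda>m. deriv \<phi> m = R m) (nhds m0)"
    by (rule eventually_eq_on_open[OF N])
  ultimately show "deriv \<phi> differentiable (at m0)" using differentiable_at_cong_ev by blast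
qed

lemma open_real_other_point:
  fixes I :: "real set"
  assumes "open I" "y \<in> I"
  shows "\<exists>x\<in>I. x \<noteq> y"
proof -
  obtain r where "r > 0" "ball y r \<subseteq> I" using openE[OF assms] by blast
  moreover have "y + r / 2 \<in> ball y r" using \<open>r > 0\<close> by (simp add: dist_real_def)
  ultimately show ?thesis by (metis add_cancel_left_right half_gt_zero less_irrefl subsetD)
qed

text \<open>Solving the equation at the pair (x0, y) for f y; the argument c stands for f x0.\<close>

definition weight_from_phi :: "real \<Rightarrow> real \<Rightarrow> (real \<Rightarrow> real) \<Rightarrow> real \<Rightarrow> real \<Rightarrow> real" where
  "weight_from_phi t c \<phi> x0 y
     = t * c * (\<phi> ((1 - t) * y + t * x0) - \<phi> x0) / ((1 - t) * (\<phi> y - \<phi> ((1 - t) * y + t * x0)))"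

lemma mean_equation_local_weight_from_phi:
  assumes "mean_equation I t f \<phi>" "inj_on \<phi> I" "open I" "convex I" "0 < t" "t < 1" "y0 \<in> I"
  obtains x0 where "x0 \<in> I" "y0 \<in> I - {x0}"
    "\<And>y. y \<in> I - {x0} \<Longrightarrow> (1 - t) * y + t * x0 \<in> I \<and> \<phi> y \<noteq> \<phi> ((1 - t) * y + t * x0)
                           \<and> f y = weight_from_phi t (f x0) \<phi> x0 y"
proof -
  obtain x0 where x0: "x0 \<in> I" "x0 \<noteq> y0" using open_real_other_point[OF assms(3,7)] by blast
  have W: "(1 - t) * y + t * x0 \<in> I \<and> \<phi> y \<noteq> \<phi> ((1 - t) * y + t * x0)
          \<and> f y = weight_from_phi t (f x0) \<phi> x0 y" if y: "y \<in> I - {x0}" for y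
  proof -
    define m where "m = (1 - t) * y + t * x0"
    have "m \<in> I" using convexD[OF assms(4) x0(1), of y t "1 - t"] y assms(5,6) by (simp add: m_def add.commute)
    moreover have "m - y = t * (x0 - y)" by (simp add: m_def algebra_simps)
    then have "m \<noteq> y" using assms(5) y by auto
    then have ne: "\<phi> y \<noteq> \<phi> m" using inj_onD[OF assms(2) _ _ \<open>m \<in> I\<close>] y by blast
    moreover have "f y * ((1 - t) * (\<phi> y - \<phi> m)) = t * f x0 * (\<phi> m - \<phi> x0)"
      using mean_equation_increments[OF assms(1) x0(1), of y] y unfolding m_def
      by (simp add: algebra_simps)
    then have "f y = weight_from_phi t (f x0) \<phi> x0 y"
      using ne assms(6) unfolding weight_from_phi_def m_def[symmetric] by (simp add: eq_divide_eq)
    ultimately show ?thesis unfolding m_def by blast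
  qed
  have "y0 \<in> I - {x0}" using assms(7) x0(2) by simp
  show thesis using x0(1) \<open>y0 \<in> I - {x0}\<close> W by (rule that)
qed

lemma mean_equation_continuous_on_f:
  fixes f \<phi> :: "real \<Rightarrow> real"
  assumes "mean_equation I t f \<phi>" "inj_on \<phi> I" "open I" "convex I" "0 < t" "t < 1"
    and "continuous_on I \<phi>"
  shows "continuous_on I f"
  unfolding continuous_on_eq_continuous_at[OF assms(3)]
proof
  fix y0 assume "y0 \<in> I"
  obtain x0 where x0: "x0 \<in> I" "y0 \<in> I - {x0}"
    and W: "\<And>y. y \<in> I - {x0} \<Longrightarrow> (1 - t) * y + t * x0 \<in> I \<and> \<phi> y \<noteq> \<phi> ((1 - t) * y + t * x0)
                           \<and> f y = weight_from_phi t (f x0) \<phi> x0 y"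
    using mean_equation_local_weight_from_phi[OF assms(1-6) \<open>y0 \<in> I\<close>] by blast
  define a where "a y = (1 - t) * y + t * x0" for y
  have "isCont \<phi> y0" "isCont \<phi> (a y0)"
    using assms(3,7) W[OF x0(2)] x0 continuous_on_eq_continuous_at unfolding a_def by blast+
  moreover have "isCont a y0" unfolding a_def by (intro continuous_intros)
  ultimately have "isCont \<phi> y0" "isCont (\<lambda>y. \<phi> (a y)) y0" by (auto intro: isCont_o2)
  then have "isCont (weight_from_phi t (f x0) \<phi> x0) y0"
    unfolding weight_from_phi_def[abs_def] a_def[symmetric] using W[OF x0(2)] assms(6)
    unfolding a_def[symmetric] by (auto intro!: continuous_intros)
  moreover have "\<forall>y\<in>I - {x0}. f y = weight_from_phi t (f x0) \<phi> x0 y" using W by blast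
  then have "eventually (\<lambda>y. f y = weight_from_phi t (f x0) \<phi> x0 y) (nhds y0)"
    using assms(3) by (intro eventually_eq_on_open[OF _ x0(2)]) (auto simp: open_Diff)
  ultimately show "isCont f y0" by (simp add: isCont_cong)
qed

lemma mean_equation_differentiable_f:
  fixes f \<phi> :: "real \<Rightarrow> real"
  assumes "mean_equation I t f \<phi>" "inj_on \<phi> I" "open I" "convex I" "0 < t" "t < 1"
    and \<phi>: "\<forall>x\<in>I. \<phi> differentiable (at x)"
  shows "\<forall>x\<in>I. f differentiable (at x)"
proof
  fix y0 assume "y0 \<in> I"
  obtain x0 where x0: "x0 \<in> I" "y0 \<in> I - {x0}"
    and W: "\<And>y. y \<in> I - {x0} \<Longrightarrow> (1 - t) * y + t * x0 \<in> I \<and> \<phi> y \<noteq> \<phi> ((1 - t) * y + t * x0)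
                           \<and> f y = weight_from_phi t (f x0) \<phi> x0 y"
    using mean_equation_local_weight_from_phi[OF assms(1-6) \<open>y0 \<in> I\<close>] by blast
  define a where "a y = (1 - t) * y + t * x0" for y
  have "a differentiable (at y0)" unfolding a_def by (intro derivative_intros)
  then have "\<phi> differentiable (at y0)" "(\<lambda>y. \<phi> (a y)) differentiable (at y0)"
    using \<phi> x0(2) W[OF x0(2)] differentiable_chain_at[of a y0 \<phi>] unfolding a_def o_def by auto
  then have "weight_from_phi t (f x0) \<phi> x0 differentiable (at y0)"
    unfolding weight_from_phi_def[abs_def] a_def[symmetric] using W[OF x0(2)] assms(6)
    unfolding a_def[symmetric] by (auto intro!: derivative_intros)
  moreover have "\<forall>y\<in>I - {x0}. f y = weight_from_phi t (f x0) \<phi> x0 y" using W by blast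
  then have "eventually (\<lambda>y. f y = weight_from_phi t (f x0) \<phi> x0 y) (nhds y0)"
    using assms(3) by (intro eventually_eq_on_open[OF _ x0(2)]) (auto simp: open_Diff)
  ultimately show "f differentiable (at y0)" by (simp add: differentiable_at_cong_ev)
qed

lemma mean_equation_twice_differentiable_f:
  fixes f \<phi> :: "real \<Rightarrow> real"
  assumes "mean_equation I t f \<phi>" "inj_on \<phi> I" "open I" "convex I" "0 < t" "t < 1"
    and \<phi>: "twice_differentiable_on \<phi> I"
  shows "twice_differentiable_on f I"
  unfolding twice_differentiable_on_def
proof
  fix y0 assume "y0 \<in> I"
  obtain x0 where x0: "x0 \<in> I" "y0 \<in> I - {x0}"
    and W: "\<And>y. y \<in> I - {x0} \<Longrightarrow> (1 - t) * y + t * x0 \<in> I \<and> \<phi> y \<noteq> \<phi> ((1 - t) * y + t * x0)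
                           \<and> f y = weight_from_phi t (f x0) \<phi> x0 y"
    using mean_equation_local_weight_from_phi[OF assms(1-6) \<open>y0 \<in> I\<close>] by blast
  have S: "open (I - {x0})" using assms(3) by (simp add: open_Diff)
  have "twice_differentiable_on (\<lambda>y. \<phi> ((1 - t) * y + t * x0)) (I - {x0})"
    using W by (intro twice_differentiable_on_compose_affine[OF S \<phi>]) blast
  moreover have "twice_differentiable_on \<phi> (I - {x0})" using twice_differentiable_on_subset[OF \<phi>] by blast
  ultimately have "twice_differentiable_on (weight_from_phi t (f x0) \<phi> x0) (I - {x0})"
    unfolding weight_from_phi_def[abs_def] using W assms(6)
    by (intro twice_differentiable_on_divide twice_differentiable_on_mult twice_differentiable_on_diff
        S twice_differentiable_on_const) auto
  moreover have "\<forall>y\<in>I - {x0}. weight_from_phi t (f x0) \<phi> x0 y = f y" using W by simp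
  ultimately have "twice_differentiable_on f (I - {x0})"
    using twice_differentiable_on_cong[OF S] by blast
  then show "f differentiable (at y0) \<and> deriv f differentiable (at y0)"
    using x0(2) unfolding twice_differentiable_on_def by blast
qed

lemma mean_equation_weight_nonzero:
  assumes "mean_equation I t f \<phi>" "inj_on \<phi> I" "\<forall>x\<in>I. f x \<noteq> 0" "0 < t" "x \<in> I" "y \<in> I"
  shows "t * f x + (1 - t) * f y \<noteq> 0"
proof
  assume zero: "t * f x + (1 - t) * f y = 0"
  then have fy: "(1 - t) * f y = - (t * f x)" by simp
  have "t * f x * (\<phi> x - \<phi> y) = t * f x * \<phi> x + (- (t * f x)) * \<phi> y"
    by (simp add: algebra_simps)
  also have "\<dots> = t * f x * \<phi> x + (1 - t) * f y * \<phi> y" by (simp only: fy)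
  also have "\<dots> = 0"
    using assms(1,5,6) zero unfolding mean_equation_def by (metis mult_zero_left)
  finally have "t * f x * (\<phi> x - \<phi> y) = 0" .
  then have "x = y" using assms inj_onD[OF assms(2)] by simp
  then show False using zero assms(3,5) by (simp add: algebra_simps)
qed

lemma mean_equation_twice_differentiable:
  fixes f \<phi> :: "real \<Rightarrow> real"
  assumes "mean_equation I t f \<phi>" "inj_on \<phi> I" "open I" "convex I" "0 < t" "t < 1"
    and "\<forall>x\<in>I. f x \<noteq> 0" "continuous_on I \<phi>"
  shows "twice_differentiable_on f I" "twice_differentiable_on \<phi> I"
proof -
  define g where "g x = f x * \<phi> x" for x
  have "continuous_on I f" using mean_equation_continuous_on_f[OF assms(1-6,8)] .
  then have "continuous_on I g" unfolding g_def using assms(8) by (intro continuous_intros)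
  moreover have "\<forall>x\<in>I. \<forall>y\<in>I. \<phi> (t * x + (1 - t) * y) * (t * f x + (1 - t) * f y) = t * g x + (1 - t) * g y"
    using assms(1) unfolding mean_equation_def g_def by (simp add: algebra_simps)
  moreover have "\<forall>x\<in>I. \<forall>y\<in>I. t * f x + (1 - t) * f y \<noteq> 0"
    using mean_equation_weight_nonzero[OF assms(1,2,7,5)] by blast
  ultimately have \<phi>_diff: "\<forall>x\<in>I. \<phi> differentiable (at x)"
    "\<forall>x\<in>I. f differentiable (at x) \<and> g differentiable (at x) \<Longrightarrow> \<forall>x\<in>I. deriv \<phi> differentiable (at x)"
    using weighted_equation_differentiable[OF assms(3,5,6) \<open>continuous_on I f\<close>] by blast+
  have "\<forall>x\<in>I. f differentiable (at x)" using mean_equation_differentiable_f[OF assms(1-6) \<phi>_diff(1)] .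
  moreover have "\<forall>x\<in>I. g differentiable (at x)"
    unfolding g_def[abs_def] using calculation \<phi>_diff(1) by auto
  ultimately show "twice_differentiable_on \<phi> I"
    unfolding twice_differentiable_on_def using \<phi>_diff by blast
  then show "twice_differentiable_on f I" by (rule mean_equation_twice_differentiable_f[OF assms(1-6)])
qed

lemma has_real_derivative_zero_on_open:
  fixes F :: "real \<Rightarrow> real"
  assumes "open U" "h \<in> U" "\<forall>z\<in>U. F z = 0" "(F has_real_derivative D) (at h)"
  shows "D = 0"
proof -
  have "eventually (\<lambda>z. F z = 0) (nhds h)" by (rule eventually_eq_on_open[OF assms(1-3)])
  then have "(F has_real_derivative D) (at h) \<longleftrightarrow> ((\<lambda>z. 0) has_real_derivative D) (at h)"
    by (rule DERIV_cong_ev[OF refl _ refl])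
  then have "((\<lambda>z. 0) has_real_derivative D) (at h)" using assms(4) by (rule iffD1)
  then show ?thesis using DERIV_const DERIV_unique by blast
qed

lemma weighted_mean_zero_second_derivative:
  fixes u u1 u2 :: "real \<Rightarrow> real"
  assumes "open I" "0 < t" "t < 1"
    and u1: "\<And>z. z \<in> I \<Longrightarrow> (u has_real_derivative u1 z) (at z)"
    and u2: "\<And>z. z \<in> I \<Longrightarrow> (u1 has_real_derivative u2 z) (at z)"
    and zero: "\<And>x y. x \<in> I \<Longrightarrow> y \<in> I \<Longrightarrow> t * x + (1 - t) * y = m \<Longrightarrow> t * u x + (1 - t) * u y = 0"
    and "x \<in> I" "y \<in> I" "t * x + (1 - t) * y = m"
  shows "(1 - t) * u2 x + t * u2 y = 0"
proof -
  define U where "U = {h. m - (1 - t) * h \<in> I \<and> m + t * h \<in> I}"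
  have "U = (\<lambda>h. m - (1 - t) * h) -` I \<inter> (\<lambda>h. m + t * h) -` I" unfolding U_def by auto
  then have "open U" by (auto intro!: continuous_open_vimage assms(1) continuous_intros)
  have mean: "t * (m - (1 - t) * h) + (1 - t) * (m + t * h) = m" for h by (simp add: algebra_simps)
  have chain: "((\<lambda>h. v (m - (1 - t) * h)) has_real_derivative v' (m - (1 - t) * h) * (- (1 - t))) (at h)"
      "((\<lambda>h. v (m + t * h)) has_real_derivative v' (m + t * h) * t) (at h)"
    if "h \<in> U" "\<And>z. z \<in> I \<Longrightarrow> (v has_real_derivative v' z) (at z)" for v v' h
  proof -
    have "m - (1 - t) * h \<in> I" "m + t * h \<in> I" using that(1) unfolding U_def by auto
    then have "(v has_real_derivative v' (m - (1 - t) * h)) (at (m - (1 - t) * h))"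
      "(v has_real_derivative v' (m + t * h)) (at (m + t * h))" using that(2) by blast+
    then show "((\<lambda>h. v (m - (1 - t) * h)) has_real_derivative v' (m - (1 - t) * h) * (- (1 - t))) (at h)"
      "((\<lambda>h. v (m + t * h)) has_real_derivative v' (m + t * h) * t) (at h)"
      by (auto intro!: DERIV_chain2[where g = "\<lambda>h. m - (1 - t) * h"] DERIV_chain2[where g = "\<lambda>h. m + t * h"]
          derivative_eq_intros)
  qed
  define \<Phi>1 where "\<Phi>1 h = t * (u1 (m - (1 - t) * h) * (- (1 - t))) + (1 - t) * (u1 (m + t * h) * t)" for h
  have d\<Phi>: "((\<lambda>h. t * u (m - (1 - t) * h) + (1 - t) * u (m + t * h)) has_real_derivative \<Phi>1 h) (at h)"
    if "h \<in> U" for h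
    unfolding \<Phi>1_def by (intro DERIV_add DERIV_cmult chain[OF that u1])
  have d\<Phi>1: "(\<Phi>1 has_real_derivative
      t * (u2 (m - (1 - t) * h) * (- (1 - t)) * (- (1 - t))) + (1 - t) * (u2 (m + t * h) * t * t)) (at h)"
    if "h \<in> U" for h
    unfolding \<Phi>1_def[abs_def] by (intro DERIV_add DERIV_cmult DERIV_cmult_right chain[OF that u2])
  have "\<forall>h\<in>U. t * u (m - (1 - t) * h) + (1 - t) * u (m + t * h) = 0"
    unfolding U_def using zero[OF _ _ mean] by blast
  then have "\<forall>h\<in>U. \<Phi>1 h = 0"
    using has_real_derivative_zero_on_open[OF \<open>open U\<close> _ _ d\<Phi>] by blast
  moreover have "m - (1 - t) * (y - x) = x" by (simp add: assms(9)[symmetric] algebra_simps)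
  moreover have "m + t * (y - x) = y" by (simp add: assms(9)[symmetric] algebra_simps)
  moreover have hU: "y - x \<in> U" unfolding U_def using calculation(2,3) assms(7,8) by simp
  ultimately have "t * (u2 x * (- (1 - t)) * (- (1 - t))) + (1 - t) * (u2 y * t * t) = 0"
    using has_real_derivative_zero_on_open[OF \<open>open U\<close> hU _ d\<Phi>1[OF hU]] by simp
  then have "t * (1 - t) * ((1 - t) * u2 x + t * u2 y) = 0" by (simp add: algebra_simps)
  then show ?thesis using assms(2,3) by simp
qed

lemma mean_equation_cross_zero:
  assumes "mean_equation I t f \<phi>" "x \<in> I" "y \<in> I" "t * x + (1 - t) * y = m"
  shows "t * (f m * (f x * \<phi> x) - f m * \<phi> m * f x) + (1 - t) * (f m * (f y * \<phi> y) - f m * \<phi> m * f y) = 0"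
proof -
  have eq: "(t * f x + (1 - t) * f y) * \<phi> m = t * f x * \<phi> x + (1 - t) * f y * \<phi> y"
    using assms unfolding mean_equation_def by blast
  have "t * (f m * (f x * \<phi> x) - f m * \<phi> m * f x) + (1 - t) * (f m * (f y * \<phi> y) - f m * \<phi> m * f y)
      = f m * ((t * f x * \<phi> x + (1 - t) * f y * \<phi> y) - (t * f x + (1 - t) * f y) * \<phi> m)"
    by (simp add: algebra_simps)
  also have "\<dots> = 0" using eq by simp
  finally show ?thesis .
qed

lemma mean_equation_cross_second_derivative:
  fixes f \<phi> :: "real \<Rightarrow> real"
  assumes "mean_equation I t f \<phi>" "open I" "0 < t" "t < 1"
    and f: "twice_differentiable_on f I" and \<phi>: "twice_differentiable_on \<phi> I"
    and "x \<in> I" "y \<in> I" "t * x + (1 - t) * y = m"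
  defines "g \<equiv> \<lambda>x. f x * \<phi> x"
  shows "(1 - t) * (f m * deriv (deriv g) x - g m * deriv (deriv f) x)
           + t * (f m * deriv (deriv g) y - g m * deriv (deriv f) y) = 0"
proof (rule weighted_mean_zero_second_derivative[OF assms(2-4) _ _ _ assms(7-9)])
  have g: "twice_differentiable_on g I" unfolding g_def using twice_differentiable_on_mult[OF assms(2) f \<phi>] .
  fix z assume "z \<in> I"
  show "((\<lambda>z. f m * g z - g m * f z) has_real_derivative f m * deriv g z - g m * deriv f z) (at z)"
    using \<open>z \<in> I\<close> f g by (intro DERIV_diff DERIV_cmult twice_differentiable_on_DERIV)
  show "((\<lambda>z. f m * deriv g z - g m * deriv f z) has_real_derivative
          f m * deriv (deriv g) z - g m * deriv (deriv f) z) (at z)"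
    using \<open>z \<in> I\<close> f g by (intro DERIV_diff DERIV_cmult twice_differentiable_on_DERIV2)
next
  fix x y assume "x \<in> I" "y \<in> I" "t * x + (1 - t) * y = m"
  then show "t * (f m * g x - g m * f x) + (1 - t) * (f m * g y - g m * f y) = 0"
    using mean_equation_cross_zero[OF assms(1)] unfolding g_def by (simp add: mult.assoc)
qed

lemma ratio_relation_constant:
  fixes a :: "real \<Rightarrow> real"
  assumes "0 < t" "t < 1" and other: "\<And>x. x \<in> I \<Longrightarrow> \<exists>y\<in>I. y \<noteq> x"
    and rel: "\<And>x y. x \<in> I \<Longrightarrow> y \<in> I \<Longrightarrow> x \<noteq> y \<Longrightarrow> (1 - t)\<^sup>2 * a x = t\<^sup>2 * a y"
  shows "\<exists>p. (t - 1/2) * p = 0 \<and> (\<forall>x\<in>I. a x = p)"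
proof (cases "t = 1/2")
  case True
  then have sq: "(1 - t)\<^sup>2 = t\<^sup>2" by simp
  have const: "a x = a y" if "x \<in> I" "y \<in> I" for x y
  proof (cases "x = y")
    case False
    from rel[OF that False] have "t\<^sup>2 * a x = t\<^sup>2 * a y" by (simp only: sq)
    then show ?thesis using assms(1) by simp
  qed simp
  show ?thesis
  proof (cases "I = {}")
    case False
    then obtain x0 where "x0 \<in> I" by blast
    have "\<forall>x\<in>I. a x = a x0" using const \<open>x0 \<in> I\<close> by blast
    moreover have "(t - 1/2) * a x0 = 0" using True by simp
    ultimately show ?thesis by blast
  qed simp
next
  case False
  have "(1 - t) ^ 4 \<noteq> t ^ 4"
  proof
    assume "(1 - t) ^ 4 = t ^ 4"
    then have "1 - t = t" using power_eq_imp_eq_base[of "1 - t" 4 t] assms(1,2) by simp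
    then show False using False by simp
  qed
  have "a x = 0" if x: "x \<in> I" for x
  proof -
    obtain y where y: "y \<in> I" "y \<noteq> x" using other[OF x] by blast
    have "((1 - t) ^ 4 - t ^ 4) * a x
        = (1 - t)\<^sup>2 * ((1 - t)\<^sup>2 * a x - t\<^sup>2 * a y) + t\<^sup>2 * ((1 - t)\<^sup>2 * a y - t\<^sup>2 * a x)"
      by algebra
    also have "\<dots> = 0" using rel[OF x y(1) y(2)[symmetric]] rel[OF y(1) x y(2)] by simp
    finally show "a x = 0" using \<open>(1 - t) ^ 4 \<noteq> t ^ 4\<close> by simp
  qed
  then show ?thesis by (intro exI[of _ 0]) simp
qed


lemma mean_equation_same_ratio:
  fixes f \<phi> :: "real \<Rightarrow> real"
  assumes "mean_equation I t f \<phi>" "open I" "0 < t" "t < 1"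
    and "twice_differentiable_on f I" "twice_differentiable_on \<phi> I" "m \<in> I"
  shows "f m * deriv (deriv (\<lambda>x. f x * \<phi> x)) m = f m * \<phi> m * deriv (deriv f) m"
  using mean_equation_cross_second_derivative[OF assms(1-7,7), of m] by (simp add: algebra_simps)

lemma mean_equation_ratio_relation:
  fixes f \<phi> :: "real \<Rightarrow> real"
  assumes "mean_equation I t f \<phi>" "inj_on \<phi> I" "open I" "convex I" "0 < t" "t < 1"
    and nz: "\<forall>x\<in>I. f x \<noteq> 0"
    and f: "twice_differentiable_on f I" and \<phi>: "twice_differentiable_on \<phi> I"
    and xy: "x \<in> I" "y \<in> I" "x \<noteq> y"
  shows "(1 - t)\<^sup>2 * (deriv (deriv f) x / f x) = t\<^sup>2 * (deriv (deriv f) y / f y)"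
proof -
  define g where "g x = f x * \<phi> x" for x
  define a where "a x = deriv (deriv f) x / f x" for x
  define m where "m = t * x + (1 - t) * y"
  define D where "D z = f m * g z - g m * f z" for z
  have fa: "deriv (deriv f) z = a z * f z" if "z \<in> I" for z
    unfolding a_def using nz that by simp
  have ga: "deriv (deriv g) z = a z * g z" if "z \<in> I" for z
    using mean_equation_same_ratio[OF assms(1,3,5,6) f \<phi> that] nz that
    unfolding a_def g_def[abs_def] by (simp add: field_simps)
  have "m \<in> I" using convexD[OF assms(4) xy(1,2), of t "1 - t"] assms(5,6) unfolding m_def by simp
  have "m - x = (1 - t) * (y - x)" unfolding m_def by (simp add: algebra_simps)
  then have "m \<noteq> x" using xy(3) assms(6) by auto
  then have "\<phi> x \<noteq> \<phi> m" using inj_onD[OF assms(2) _ xy(1) \<open>m \<in> I\<close>] by blast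
  then have "D x \<noteq> 0" using nz \<open>m \<in> I\<close> xy(1) unfolding D_def g_def by (simp add: algebra_simps)
  have "t * D x + (1 - t) * D y = 0"
    using mean_equation_cross_zero[OF assms(1) xy(1,2) m_def[symmetric]] unfolding D_def g_def
    by (simp add: algebra_simps)
  moreover have "(1 - t) * (a x * D x) + t * (a y * D y) = 0"
    using mean_equation_cross_second_derivative[OF assms(1,3,5,6) f \<phi> xy(1,2) m_def[symmetric]]
      fa ga xy unfolding D_def g_def[abs_def] by (simp add: algebra_simps)
  moreover have "((1 - t)\<^sup>2 * a x - t\<^sup>2 * a y) * D x
      = (1 - t) * ((1 - t) * (a x * D x) + t * (a y * D y)) - t * a y * (t * D x + (1 - t) * D y)"
    by (simp add: algebra_simps power2_eq_square)
  ultimately have "((1 - t)\<^sup>2 * a x - t\<^sup>2 * a y) * D x = 0" by simp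
  then show ?thesis using \<open>D x \<noteq> 0\<close> unfolding a_def by simp
qed

lemma mean_equation_ode:
  fixes f \<phi> :: "real \<Rightarrow> real"
  assumes "mean_equation I t f \<phi>" "inj_on \<phi> I" "open I" "convex I" "0 < t" "t < 1"
    and nz: "\<forall>x\<in>I. f x \<noteq> 0"
    and f: "twice_differentiable_on f I" and \<phi>: "twice_differentiable_on \<phi> I"
  shows "\<forall>x\<in>I. 2 * deriv f x * deriv \<phi> x + f x * deriv (deriv \<phi>) x = 0"
    and "\<exists>p. (t - 1/2) * p = 0 \<and> (\<forall>x\<in>I. deriv (deriv f) x = p * f x)"
proof -
  show "\<forall>x\<in>I. 2 * deriv f x * deriv \<phi> x + f x * deriv (deriv \<phi>) x = 0"
  proof
    fix x assume x: "x \<in> I"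
    have "f x * (2 * deriv f x * deriv \<phi> x + f x * deriv (deriv \<phi>) x)
        = f x * deriv (deriv (\<lambda>x. f x * \<phi> x)) x - f x * \<phi> x * deriv (deriv f) x"
      using deriv2_mult[OF assms(3) f \<phi> x] by (simp add: algebra_simps)
    also have "\<dots> = 0" using mean_equation_same_ratio[OF assms(1,3,5,6) f \<phi> x] by simp
    finally show "2 * deriv f x * deriv \<phi> x + f x * deriv (deriv \<phi>) x = 0" using nz x by simp
  qed
  have "(1 - t)\<^sup>2 * (deriv (deriv f) x / f x) = t\<^sup>2 * (deriv (deriv f) y / f y)"
    if "x \<in> I" "y \<in> I" "x \<noteq> y" for x y
    using mean_equation_ratio_relation[OF assms that] .
  then obtain p where "(t - 1/2) * p = 0" "\<forall>x\<in>I. deriv (deriv f) x / f x = p"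
    using ratio_relation_constant[where a = "\<lambda>x. deriv (deriv f) x / f x", OF assms(5,6)
        open_real_other_point[OF assms(3)]] by blast
  then show "\<exists>p. (t - 1/2) * p = 0 \<and> (\<forall>x\<in>I. deriv (deriv f) x = p * f x)"
    using nz by (auto simp: field_simps)
qed

lemma strict_mono_or_antimono_imp_inj_on:
  fixes \<phi> :: "real \<Rightarrow> real"
  assumes "strict_mono_on I \<phi> \<or> strict_antimono_on I \<phi>"
  shows "inj_on \<phi> I"
proof -
  have "strict_mono_on I \<phi> \<or> strict_mono_on I (\<lambda>x. - \<phi> x)"
    using assms by (auto simp: strict_mono_on_def monotone_on_def)
  then show ?thesis
    by (metis (no_types, lifting) inj_on_def neg_equal_iff_equal strict_mono_on_imp_inj_on)
qed

lemma mean_equation_imp_regular_ode: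
  fixes \<phi> f :: "real \<Rightarrow> real"
  assumes "mean_equation I t f \<phi>" "open I" "is_interval I"
    and mono: "strict_mono_on I \<phi> \<or> strict_antimono_on I \<phi>"
    and "\<exists>x\<in>I. f x \<noteq> 0" "0 < t" "t < 1"
  shows "(\<forall>x\<in>I. f x \<noteq> 0) \<and> twice_differentiable_on f I \<and> twice_differentiable_on \<phi> I \<and>
         (\<forall>x\<in>I. 2 * deriv f x * deriv \<phi> x + f x * deriv (deriv \<phi>) x = 0) \<and>
         (\<exists>p. (t - 1/2) * p = 0 \<and> (\<forall>x\<in>I. deriv (deriv f) x = p * f x))"
proof -
  have "convex I" using is_interval_convex[OF assms(3)] .
  have inj: "inj_on \<phi> I" using strict_mono_or_antimono_imp_inj_on[OF mono] .
  have nz: "\<forall>x\<in>I. f x \<noteq> 0"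
    using mean_equation_nonzero[OF assms(1) inj \<open>convex I\<close> assms(6,7,5)] .
  have "continuous_on I \<phi>"
    using mean_equation_continuous_on_phi[OF assms(2,3) mono assms(1) nz assms(6,7)] .
  then have f: "twice_differentiable_on f I" and \<phi>: "twice_differentiable_on \<phi> I"
    using mean_equation_twice_differentiable[OF assms(1) inj assms(2) \<open>convex I\<close> assms(6,7) nz] by blast+
  show ?thesis
    using nz f \<phi> mean_equation_ode[OF assms(1) inj assms(2) \<open>convex I\<close> assms(6,7) nz f \<phi>] by blast
qed

theorem theorem2p2:
  fixes I :: "real set" and \<phi> f :: "real \<Rightarrow> real" and t :: real
  assumes "open I" and "is_interval I" and "I \<noteq> {}"
    and "strict_mono_on I \<phi> \<or> strict_antimono_on I \<phi>"
    and "\<exists>x\<in>I. f x \<noteq> 0"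
    and "0 < t" and "t < 1"
  shows "((\<forall>x\<in>I. \<forall>y\<in>I.
            (t * f x + (1 - t) * f y) * \<phi> (t * x + (1 - t) * y)
              = t * f x * \<phi> x + (1 - t) * f y * \<phi> y)
         \<longleftrightarrow>
          ((\<forall>x\<in>I. f x \<noteq> 0) \<and>
           (\<forall>x\<in>I. f differentiable (at x) \<and> deriv f differentiable (at x)
                 \<and> \<phi> differentiable (at x) \<and> deriv \<phi> differentiable (at x)) \<and>
           (\<forall>x\<in>I. 2 * deriv f x * deriv \<phi> x + f x * deriv (deriv \<phi>) x = 0) \<and>
           (\<exists>p::real. (t - 1/2) * p = 0 \<and> (\<forall>x\<in>I. deriv (deriv f) x = p * f x))))
       \<and>
         ((\<forall>x\<in>I. \<forall>y\<in>I.
            (t * f x + (1 - t) * f y) * \<phi> (t * x + (1 - t) * y)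
              = t * f x * \<phi> x + (1 - t) * f y * \<phi> y)
         \<longleftrightarrow>
          ((\<forall>x\<in>I. f x \<noteq> 0) \<and>
           (\<exists>p::real. (t - 1/2) * p = 0 \<and>
              pair_equiv_on I f (\<lambda>x. f x * \<phi> x) (S_fun p) (C_fun p))))"
proof -
  have "convex I" using is_interval_convex[OF assms(2)] .
  have "\<exists>x\<in>I. \<exists>y\<in>I. \<phi> x \<noteq> \<phi> y"
    using assms(1,3) open_real_other_point strict_mono_or_antimono_imp_inj_on[OF assms(4)]
    by (metis equals0I inj_onD)
  then have ode_imp_equiv: "pair_equiv_on I f (\<lambda>x. f x * \<phi> x) (S_fun p) (C_fun p)"
    if "\<forall>x\<in>I. f x \<noteq> 0" "twice_differentiable_on f I" "twice_differentiable_on \<phi> I"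
      "\<forall>x\<in>I. 2 * deriv f x * deriv \<phi> x + f x * deriv (deriv \<phi>) x = 0"
      "\<forall>x\<in>I. deriv (deriv f) x = p * f x" for p
    using pair_equiv_if_ode[OF assms(1) \<open>convex I\<close>] that by blast
  have equiv_imp_eq: "mean_equation I t f \<phi>"
    if "\<forall>x\<in>I. f x \<noteq> 0" "(t - 1/2) * p = 0" "pair_equiv_on I f (\<lambda>x. f x * \<phi> x) (S_fun p) (C_fun p)" for p
    using mean_equation_if_pair_equiv[OF \<open>convex I\<close> assms(6,7) that] .
  show ?thesis
    using mean_equation_imp_regular_ode[OF _ assms(1,2,4-7)] ode_imp_equiv equiv_imp_eq
    unfolding mean_equation_def twice_differentiable_on_def by blast
qed

end
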